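(* As $n\to\infty$, $$\mathbb{E}[Z_n^2]=4(n\log n)^2+8\gamma\,n^2\log n+\left(16+4\gamma^2-\frac{2\pi^2}{3}\right)n^2+O(n^{3/2}),$$ and $$\operatorname{Var}[Z_n]=\left(16-\frac{2\pi^2}{3}\right)n^2+O(n^{3/2}),$$ where $\gamma$ is Euler's constant.
   Context: Consider the random sequence of trees $(T_n)_{n\ge1}$ with node labels $1,\dots,n$ defined as follows: $T_1$ is a single node labeled $1$; $T_2$ consists of nodes $1,2$ joined by an edge; for $n\ge3$, $T_n$ is obtained from $T_{n-1}$ by adding a node labeled $n$ and an edge joining it to a node $i\in\{1,\dots,n-1\}$ chosen, conditionally on $T_1,\dots,T_{n-1}$, with probability $D_{n-1,i}/(2(n-2))$, where $D_{m,i}$ is the degree of node $i$ in $T_m$. The Zagreb index of $T_n$ is $Z_n=\sum_{j=1}^n D_{n,j}^2$. *)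

theory Defs
  imports "HOL-Probability.Probability" "HOL-Library.Landau_Symbols"
begin

text \<open>A labelled tree on nodes 1..n is represented by its list of edges; the edge
  added at step k is the pair (k, i), joining the new node k to the chosen node i.\<close>

type_synonym tree = "(nat \<times> nat) list"

definition deg :: "tree \<Rightarrow> nat \<Rightarrow> nat" where
  "deg es i = length (filter (\<lambda>(a, b). a = i \<or> b = i) es)"

text \<open>Distribution of T_n. For n = m+3 (so n >= 3), node n is attached to node
  i in {1..n-1} with probability D_{n-1,i} / (2(n-2)).\<close>
fun tree_pmf :: "nat \<Rightarrow> tree pmf" where
  "tree_pmf 0 = return_pmf []"
| "tree_pmf (Suc 0) = return_pmf []"
| "tree_pmf (Suc (Suc 0)) = return_pmf [(2, 1)]"
| "tree_pmf (Suc (Suc (Suc m))) =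
     tree_pmf (Suc (Suc m)) \<bind>
       (\<lambda>es. map_pmf (\<lambda>i. es @ [(m + 3, i)])
          (pmf_of_list [(i, real (deg es i) / (2 * real (m + 1))). i \<leftarrow> [1..<m + 3]]))"

definition zagreb :: "nat \<Rightarrow> tree \<Rightarrow> nat" where
  "zagreb n es = (\<Sum>j = 1..n. deg es j ^ 2)"

end

theory Submission
  imports Defs "HOL-Analysis.Harmonic_Numbers" "HOL-Real_Asymp.Real_Asymp"
begin

(* Let Z_n and S_n be the sums of the squares and of the cubes of the degrees of T_n.
   Attaching node n+1 to a node of degree d raises Z_n by 2d + 2 and S_n by 3d^2 + 3d + 2,
   and such a node is chosen with probability d / (2(n-1)); averaging over this choice gives
   first-order linear recurrences for E Z_n, E S_n and E Z_n^2.  They are solved in closed form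
   in terms of H_n, the second-order harmonic numbers H_n^(2) and rho_n = binom(2n,n)/4^n,
   e.g. E Z_n = 2(n-1) H_(n-1).  The expansions then follow from H_n = ln n + gamma + O(1/n),
   H_n^(2) = pi^2/6 + O(1/n) and rho_n = O(n^(-1/2)). *)

section \<open>Recursive trees and the attachment step\<close>

lemma expectation_pmf_of_list_distinct:
  fixes f :: "'a \<Rightarrow> real"
  assumes wf: "pmf_of_list_wf (map (\<lambda>x. (x, w x)) xs)" and "distinct xs"
  shows "measure_pmf.expectation (pmf_of_list (map (\<lambda>x. (x, w x)) xs)) f = (\<Sum>x\<in>set xs. w x * f x)"
proof -
  have pmf: "pmf (pmf_of_list (map (\<lambda>x. (x, w x)) xs)) x = w x" if "x \<in> set xs" for x
  proof -
    have "sum_list (map snd (filter (\<lambda>z. fst z = x) (map (\<lambda>x. (x, w x)) xs)))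
        = (if x \<in> set xs then w x else 0)"
      using \<open>distinct xs\<close> by (induction xs) auto
    then show ?thesis using that by (simp add: pmf_pmf_of_list[OF wf])
  qed
  show ?thesis
    using set_pmf_of_list[OF wf]
    by (subst integral_measure_pmf_real[of "set xs"]) (auto simp: pmf mult.commute)
qed

definition recursive_tree :: "nat \<Rightarrow> tree \<Rightarrow> bool" where
  "recursive_tree n es \<longleftrightarrow>
     length es = n - 1 \<and> (\<forall>(k, i) \<in> set es. 1 \<le> i \<and> i < k \<and> k \<le> n)"

lemma deg_Nil [simp]: "deg [] j = 0"
  by (simp add: deg_def)

lemma deg_Cons: "deg ((k, i) # es) j = deg es j + (if j = k \<or> j = i then 1 else 0)"
  by (auto simp: deg_def)

lemma deg_append_edge [simp]: "deg (es @ [(k, i)]) j = deg es j + (if j = k \<or> j = i then 1 else 0)"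
  by (auto simp: deg_def)

lemma deg_eq_0_beyond: "recursive_tree n es \<Longrightarrow> n < j \<Longrightarrow> deg es j = 0"
  by (fastforce simp: deg_def recursive_tree_def filter_empty_conv)

lemma sum_deg_eq_twice_length:
  assumes "finite A" "\<forall>(k, i) \<in> set es. k \<noteq> i \<and> k \<in> A \<and> i \<in> A"
  shows "(\<Sum>j\<in>A. deg es j) = 2 * length es"
  using assms(2)
proof (induction es)
  case (Cons e es)
  obtain k i where e: "e = (k, i)" by fastforce
  have ki: "k \<noteq> i" "k \<in> A" "i \<in> A" using Cons.prems by (auto simp: e)
  have "{j. j = k \<or> j = i} = {k, i}" by auto
  then have "(\<Sum>j\<in>A. if j = k \<or> j = i then 1 else 0) = card (A \<inter> {k, i})"
    using assms(1) by (simp add: sum.If_cases)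
  also have "\<dots> = 2" using ki by (simp add: Int_absorb1)
  finally show ?case using Cons by (simp add: e deg_Cons sum.distrib)
qed simp

lemma sum_deg_recursive_tree: "recursive_tree n es \<Longrightarrow> (\<Sum>j=1..n. deg es j) = 2 * (n - 1)"
  by (subst sum_deg_eq_twice_length) (auto simp: recursive_tree_def)

definition attach_prob :: "nat \<Rightarrow> tree \<Rightarrow> nat \<Rightarrow> real" where
  "attach_prob n es i = real (deg es i) / (2 * (real n - 1))"

lemma sum_attach_prob:
  assumes "recursive_tree n es" "n \<ge> 2"
  shows "(\<Sum>i=1..n. attach_prob n es i) = 1"
proof -
  have "(\<Sum>i=1..n. real (deg es i)) = 2 * (real n - 1)"
    using arg_cong[OF sum_deg_recursive_tree[OF assms(1)], of real] assms(2)
    by (simp add: of_nat_diff)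
  then show ?thesis
    using assms(2) by (simp add: attach_prob_def flip: sum_divide_distrib)
qed

abbreviation attach_list :: "nat \<Rightarrow> tree \<Rightarrow> (nat \<times> real) list" where
  "attach_list n es \<equiv> map (\<lambda>i. (i, attach_prob n es i)) [1..<Suc n]"

lemma tree_pmf_Suc:
  assumes "n \<ge> 2"
  shows "tree_pmf (Suc n) =
    tree_pmf n \<bind> (\<lambda>es. map_pmf (\<lambda>i. es @ [(Suc n, i)]) (pmf_of_list (attach_list n es)))"
proof -
  obtain m where "n = Suc (Suc m)" using assms by (metis add_2_eq_Suc le_iff_add)
  then show ?thesis
    by (simp only: tree_pmf.simps) (simp add: attach_prob_def numeral_3_eq_3 del: upt_Suc)
qed

lemma pmf_of_list_wf_attach_list:
  assumes "recursive_tree n es" "n \<ge> 2"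
  shows "pmf_of_list_wf (attach_list n es)"
proof (rule pmf_of_list_wfI)
  have "sum_list (map snd (attach_list n es)) = sum (attach_prob n es) (set [1..<Suc n])"
    by (simp only: map_map o_def snd_conv sum_set_upt_conv_sum_list_nat)
  also have "set [1..<Suc n] = {1..n}" by auto
  finally show "sum_list (map snd (attach_list n es)) = 1"
    using sum_attach_prob[OF assms] by simp
qed (auto simp: attach_prob_def)

lemma set_tree_pmf: "set_pmf (tree_pmf n) \<subseteq> {es. recursive_tree n es}"
proof (cases "n \<ge> 2")
  case True
  then show ?thesis
  proof (induction n rule: nat_induct_at_least)
    case base
    then show ?case by (simp add: numeral_2_eq_2 recursive_tree_def)
  next
    case (Suc n)
    show ?case
    proof
      fix es' assume "es' \<in> set_pmf (tree_pmf (Suc n))"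
      then obtain es i where es: "es \<in> set_pmf (tree_pmf n)"
        and i: "i \<in> set_pmf (pmf_of_list (attach_list n es))" and es': "es' = es @ [(Suc n, i)]"
        by (auto simp: tree_pmf_Suc[OF Suc.hyps])
      have "recursive_tree n es" using es Suc.IH by auto
      moreover have "i \<in> {1..n}"
        using set_pmf_of_list[OF pmf_of_list_wf_attach_list[OF \<open>recursive_tree n es\<close> Suc.hyps]] i
        by auto
      ultimately show "es' \<in> {es. recursive_tree (Suc n) es}"
        using Suc.hyps by (auto simp: es' recursive_tree_def)
    qed
  qed
next
  case False
  then have "n = 0 \<or> n = 1" by auto
  then show ?thesis by (auto simp: recursive_tree_def)
qed

lemma finite_set_tree_pmf: "finite (set_pmf (tree_pmf n))"
proof (rule finite_subset[OF set_tree_pmf])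
  have "{es. recursive_tree n es} \<subseteq> {es. set es \<subseteq> {..n} \<times> {..n} \<and> length es = n - 1}"
    by (auto simp: recursive_tree_def)
  then show "finite {es. recursive_tree n es}"
    by (rule finite_subset) (intro finite_lists_length_eq finite_cartesian_product; simp)
qed

lemma integrable_tree_pmf [simp]: "integrable (measure_pmf (tree_pmf n)) (f :: tree \<Rightarrow> real)"
  by (rule integrable_measure_pmf_finite[OF finite_set_tree_pmf])

lemma expectation_tree_pmf_Suc:
  fixes F G :: "tree \<Rightarrow> real"
  assumes n: "n \<ge> 2"
    and G: "\<And>es. recursive_tree n es \<Longrightarrow>
      (\<Sum>i=1..n. attach_prob n es i * F (es @ [(Suc n, i)])) = G es"
  shows "measure_pmf.expectation (tree_pmf (Suc n)) F = measure_pmf.expectation (tree_pmf n) G"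
proof -
  have wf: "pmf_of_list_wf (attach_list n es)" if "es \<in> set_pmf (tree_pmf n)" for es
    using pmf_of_list_wf_attach_list[OF _ n] set_tree_pmf that by blast
  have step: "measure_pmf.expectation (map_pmf (\<lambda>i. es @ [(Suc n, i)]) (pmf_of_list (attach_list n es))) F
      = G es" if "es \<in> set_pmf (tree_pmf n)" for es
  proof -
    have "measure_pmf.expectation (map_pmf (\<lambda>i. es @ [(Suc n, i)]) (pmf_of_list (attach_list n es))) F
        = (\<Sum>i\<in>set [1..<Suc n]. attach_prob n es i * F (es @ [(Suc n, i)]))"
      using wf[OF that] by (simp add: expectation_pmf_of_list_distinct del: upt_Suc)
    also have "set [1..<Suc n] = {1..n}" by auto
    finally show ?thesis using G set_tree_pmf that by auto
  qed
  have "measure_pmf.expectation (tree_pmf (Suc n)) F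
      = (\<Sum>es\<in>set_pmf (tree_pmf n). pmf (tree_pmf n) es *\<^sub>R
           measure_pmf.expectation (map_pmf (\<lambda>i. es @ [(Suc n, i)]) (pmf_of_list (attach_list n es))) F)"
    unfolding tree_pmf_Suc[OF n]
    by (rule pmf_expectation_bind)
      (use wf finite_set_pmf_of_list in \<open>auto simp: finite_set_tree_pmf simp del: upt_Suc\<close>)
  also have "\<dots> = (\<Sum>es\<in>set_pmf (tree_pmf n). pmf (tree_pmf n) es *\<^sub>R G es)"
    using step by (intro sum.cong) simp_all
  also have "\<dots> = measure_pmf.expectation (tree_pmf n) G"
    by (rule integral_measure_pmf[symmetric]) (auto simp: finite_set_tree_pmf)
  finally show ?thesis .
qed

section \<open>Moments of degree power sums\<close>

definition deg_power_sum :: "nat \<Rightarrow> nat \<Rightarrow> tree \<Rightarrow> real" where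
  "deg_power_sum k n es = (\<Sum>j=1..n. real (deg es j) ^ k)"

lemma deg_power_sum_attach:
  assumes "recursive_tree n es" "i \<in> {1..n}" "k > 0"
  shows "deg_power_sum k (Suc n) (es @ [(Suc n, i)])
    = deg_power_sum k n es + (real (deg es i) + 1) ^ k - real (deg es i) ^ k + 1"
proof -
  have "deg es (Suc n) = 0" using deg_eq_0_beyond[OF assms(1)] by simp
  then have last: "real (deg (es @ [(Suc n, i)]) (Suc n)) ^ k = 1" using assms(2) by simp
  have "real (deg (es @ [(Suc n, i)]) j) ^ k
      = real (deg es j) ^ k + (if j = i then (real (deg es i) + 1) ^ k - real (deg es i) ^ k else 0)"
    if "j \<in> {1..n}" for j
    using that by auto
  then have "(\<Sum>j=1..n. real (deg (es @ [(Suc n, i)]) j) ^ k)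
      = deg_power_sum k n es + (real (deg es i) + 1) ^ k - real (deg es i) ^ k"
    using assms(2) by (simp add: deg_power_sum_def sum.distrib)
  then show ?thesis
    using last \<open>deg es (Suc n) = 0\<close> by (simp add: deg_power_sum_def)
qed

lemma attach_average:
  assumes "recursive_tree n es" "n \<ge> 2"
  shows "(\<Sum>i=1..n. attach_prob n es i * (c0 + c1 * real (deg es i) + c2 * real (deg es i) ^ 2))
    = c0 + (c1 * deg_power_sum 2 n es + c2 * deg_power_sum 3 n es) / (2 * (real n - 1))"
proof -
  have "(\<Sum>i=1..n. attach_prob n es i * (c0 + c1 * real (deg es i) + c2 * real (deg es i) ^ 2))
    = c0 * (\<Sum>i=1..n. attach_prob n es i)
      + (c1 * deg_power_sum 2 n es + c2 * deg_power_sum 3 n es) / (2 * (real n - 1))"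
    by (simp add: attach_prob_def deg_power_sum_def sum_distrib_left sum.distrib add_divide_distrib
        sum_divide_distrib power2_eq_square power3_eq_cube algebra_simps)
  then show ?thesis using sum_attach_prob[OF assms] by simp
qed

definition deg_moment :: "nat \<Rightarrow> nat \<Rightarrow> real" where
  "deg_moment k n = measure_pmf.expectation (tree_pmf n) (deg_power_sum k n)"

definition zagreb_moment2 :: "nat \<Rightarrow> real" where
  "zagreb_moment2 n = measure_pmf.expectation (tree_pmf n) (\<lambda>es. deg_power_sum 2 n es ^ 2)"

lemma deg_moment_2_Suc:
  assumes n: "n \<ge> 2"
  shows "deg_moment 2 (Suc n) = deg_moment 2 n * real n / (real n - 1) + 2"
proof -
  have "measure_pmf.expectation (tree_pmf (Suc n)) (deg_power_sum 2 (Suc n))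
      = measure_pmf.expectation (tree_pmf n) (\<lambda>es. deg_power_sum 2 n es * real n / (real n - 1) + 2)"
  proof (rule expectation_tree_pmf_Suc[OF n])
    fix es assume es: "recursive_tree n es"
    have "(\<Sum>i=1..n. attach_prob n es i * deg_power_sum 2 (Suc n) (es @ [(Suc n, i)]))
        = (\<Sum>i=1..n. attach_prob n es i
            * ((deg_power_sum 2 n es + 2) + 2 * real (deg es i) + 0 * real (deg es i) ^ 2))"
      using es by (intro sum.cong) (simp_all add: deg_power_sum_attach power2_eq_square algebra_simps)
    also have "\<dots> = deg_power_sum 2 n es * real n / (real n - 1) + 2"
    proof -
      \<comment> \<open>Naming \<open>real n - 1\<close> keeps the denominators atomic for \<open>field_simps\<close>.\<close>
      obtain p where p: "p > 0" "real n = p + 1" using n by (intro that[of "real n - 1"]) auto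
      show ?thesis unfolding attach_average[OF es n] p(2) using p(1) by (simp add: field_simps)
    qed
    finally show "(\<Sum>i=1..n. attach_prob n es i * deg_power_sum 2 (Suc n) (es @ [(Suc n, i)])) = \<dots>" .
  qed
  then show ?thesis by (simp add: deg_moment_def)
qed

lemma deg_moment_3_Suc:
  assumes n: "n \<ge> 2"
  shows "deg_moment 3 (Suc n)
    = deg_moment 3 n * (2 * real n + 1) / (2 * (real n - 1)) + 3 * deg_moment 2 n / (2 * (real n - 1)) + 2"
proof -
  have "measure_pmf.expectation (tree_pmf (Suc n)) (deg_power_sum 3 (Suc n))
      = measure_pmf.expectation (tree_pmf n) (\<lambda>es. deg_power_sum 3 n es * (2 * real n + 1) / (2 * (real n - 1))
          + 3 * deg_power_sum 2 n es / (2 * (real n - 1)) + 2)"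
  proof (rule expectation_tree_pmf_Suc[OF n])
    fix es assume es: "recursive_tree n es"
    have "(\<Sum>i=1..n. attach_prob n es i * deg_power_sum 3 (Suc n) (es @ [(Suc n, i)]))
        = (\<Sum>i=1..n. attach_prob n es i
            * ((deg_power_sum 3 n es + 2) + 3 * real (deg es i) + 3 * real (deg es i) ^ 2))"
      using es by (intro sum.cong) (simp_all add: deg_power_sum_attach power2_eq_square power3_eq_cube algebra_simps)
    also have "\<dots> = deg_power_sum 3 n es * (2 * real n + 1) / (2 * (real n - 1))
          + 3 * deg_power_sum 2 n es / (2 * (real n - 1)) + 2"
    proof -
      obtain p where p: "p > 0" "real n = p + 1" using n by (intro that[of "real n - 1"]) auto
      show ?thesis unfolding attach_average[OF es n] p(2) using p(1) by (simp add: field_simps)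
    qed
    finally show "(\<Sum>i=1..n. attach_prob n es i * deg_power_sum 3 (Suc n) (es @ [(Suc n, i)])) = \<dots>" .
  qed
  then show ?thesis by (simp add: deg_moment_def)
qed

lemma zagreb_moment2_Suc:
  assumes n: "n \<ge> 2"
  shows "zagreb_moment2 (Suc n) = zagreb_moment2 n * (real n + 1) / (real n - 1)
    + 4 * deg_moment 2 n * real n / (real n - 1) + 2 * deg_moment 3 n / (real n - 1) + 4"
proof -
  have "measure_pmf.expectation (tree_pmf (Suc n)) (\<lambda>es. deg_power_sum 2 (Suc n) es ^ 2)
      = measure_pmf.expectation (tree_pmf n) (\<lambda>es. deg_power_sum 2 n es ^ 2 * (real n + 1) / (real n - 1)
          + 4 * deg_power_sum 2 n es * real n / (real n - 1) + 2 * deg_power_sum 3 n es / (real n - 1) + 4)"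
  proof (rule expectation_tree_pmf_Suc[OF n])
    fix es assume es: "recursive_tree n es"
    let ?Z = "deg_power_sum 2 n es"
    have "(\<Sum>i=1..n. attach_prob n es i * deg_power_sum 2 (Suc n) (es @ [(Suc n, i)]) ^ 2)
        = (\<Sum>i=1..n. attach_prob n es i
            * ((?Z + 2) ^ 2 + (4 * ?Z + 8) * real (deg es i) + 4 * real (deg es i) ^ 2))"
      using es by (intro sum.cong) (simp_all add: deg_power_sum_attach power2_eq_square algebra_simps)
    also have "\<dots> = ?Z ^ 2 * (real n + 1) / (real n - 1)
          + 4 * ?Z * real n / (real n - 1) + 2 * deg_power_sum 3 n es / (real n - 1) + 4"
    proof -
      obtain p where p: "p > 0" "real n = p + 1" using n by (intro that[of "real n - 1"]) auto
      show ?thesis unfolding attach_average[OF es n] p(2) using p(1) by (simp add: field_simps power2_eq_square)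
    qed
    finally show "(\<Sum>i=1..n. attach_prob n es i * deg_power_sum 2 (Suc n) (es @ [(Suc n, i)]) ^ 2) = \<dots>" .
  qed
  then show ?thesis by (simp add: zagreb_moment2_def deg_moment_def)
qed

section \<open>Closed forms\<close>

definition harm2 :: "nat \<Rightarrow> real" where
  "harm2 n = (\<Sum>k<n. 1 / (real k + 1) ^ 2)"

text \<open>This is \<open>(2n choose n) / 4^n\<close>, of order \<open>1 / sqrt (pi n)\<close>.\<close>

definition central_binomial_ratio :: "nat \<Rightarrow> real" where
  "central_binomial_ratio n = (\<Prod>k<n. (2 * real k + 1) / (2 * real k + 2))"

lemma harm2_Suc: "harm2 (Suc n) = harm2 n + 1 / (real n + 1) ^ 2"
  by (simp add: harm2_def)

lemma central_binomial_ratio_Suc: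
  "central_binomial_ratio (Suc n) = central_binomial_ratio n * (2 * real n + 1) / (2 * (real n + 1))"
  by (simp add: central_binomial_ratio_def algebra_simps)

lemma harm_eq_harm_pred: "n \<ge> 1 \<Longrightarrow> harm n = harm (n - 1) + 1 / real n"
  by (cases n) (simp_all add: harm_Suc inverse_eq_divide)

lemma deg_moment_2_closed: "n \<ge> 2 \<Longrightarrow> deg_moment 2 n = 2 * (real n - 1) * harm (n - 1)"
proof (induction n rule: nat_induct_at_least)
  case base
  then show ?case
    by (simp add: deg_moment_def deg_power_sum_def deg_def numeral_2_eq_2 harm_def)
next
  case (Suc n)
  obtain p where p: "p > 0" "real n = p + 1" using Suc.hyps by (intro that[of "real n - 1"]) auto
  have harm_n: "harm n = harm (n - 1) + 1 / real n" using Suc.hyps by (simp add: harm_eq_harm_pred)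
  show ?case
    unfolding deg_moment_2_Suc[OF Suc.hyps] Suc.IH diff_Suc_1 harm_n using Suc.hyps p
    by (simp add: field_simps)
qed

text \<open>Multiplied by \<open>n + 1\<close>, the shifts of \<open>central_binomial_ratio\<close> and of
  \<open>harm n ^ 2 - harm2 n\<close> have no denominator \<open>n + 1\<close>; the closed forms below are grouped
  accordingly, leaving only the denominators \<open>n\<close> and \<open>n - 1\<close> in the induction steps.\<close>

lemma Suc_mult_central_binomial_ratio_Suc:
  "real (Suc n) * central_binomial_ratio (Suc n) = (real n + 1 / 2) * central_binomial_ratio n"
  by (simp add: central_binomial_ratio_def field_simps)

lemma Suc_mult_harm_sq_diff_Suc:
  "real (Suc n) * (harm (Suc n) ^ 2 - harm2 (Suc n))
    = real (Suc n) * (harm n ^ 2 - harm2 n) + 2 * harm n"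
proof -
  have "x * ((h + 1 / x) ^ 2 - (q + 1 / x ^ 2)) = x * (h ^ 2 - q) + 2 * h" if "x > 0" for x h q :: real
    using that by (simp add: field_simps power2_eq_square)
  then show ?thesis
    by (simp add: harm_Suc harm2_Suc inverse_eq_divide add.commute)
qed

lemma deg_moment_3_closed:
  "n \<ge> 2 \<Longrightarrow> deg_moment 3 n
    = 32 * (real n - 1) * (real n * central_binomial_ratio n) - 6 * (real n - 1) * harm (n - 1) - 16 * real n + 16"
proof (induction n rule: nat_induct_at_least)
  case base
  then show ?case
    by (simp add: deg_moment_def deg_power_sum_def deg_def numeral_2_eq_2
        harm_def central_binomial_ratio_def)
next
  case (Suc n)
  obtain p where p: "p > 0" "real n = p + 1" using Suc.hyps by (intro that[of "real n - 1"]) auto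
  have harm_n: "harm n = harm (n - 1) + 1 / real n" using Suc.hyps by (simp add: harm_eq_harm_pred)
  show ?case
    unfolding deg_moment_3_Suc[OF Suc.hyps] Suc.IH deg_moment_2_closed[OF Suc.hyps]
      Suc_mult_central_binomial_ratio_Suc diff_Suc_1 harm_n using Suc.hyps p
    by (simp add: field_simps)
qed

lemma zagreb_moment2_closed:
  "n \<ge> 2 \<Longrightarrow> zagreb_moment2 n
    = 16 * real n * (real n - 1) + 4 * (real n - 1) * (real n * (harm n ^ 2 - harm2 n))
      - 128 * (real n - 1) * (real n * central_binomial_ratio n) + 12 * (real n - 1) * harm (n - 1)
      + 48 * (real n - 1)"
proof (induction n rule: nat_induct_at_least)
  case base
  then show ?case
    by (simp add: zagreb_moment2_def deg_power_sum_def deg_def numeral_2_eq_2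
        harm_def harm2_def central_binomial_ratio_def)
next
  case (Suc n)
  obtain p where p: "p > 0" "real n - 1 = p" using Suc.hyps by (intro that[of "real n - 1"]) auto
  have N: "real n > 0" "real n = p + 1" using p by auto
  have harm_pred: "harm (n - 1) = harm n - 1 / real n" using Suc.hyps by (simp add: harm_eq_harm_pred)
  show ?case
    unfolding zagreb_moment2_Suc[OF Suc.hyps] Suc.IH deg_moment_2_closed[OF Suc.hyps]
      deg_moment_3_closed[OF Suc.hyps] Suc_mult_central_binomial_ratio_Suc Suc_mult_harm_sq_diff_Suc
      diff_Suc_1 harm_pred using p(1) N(1)
    by (simp add: p(2) field_simps power2_eq_square) (simp add: N(2) algebra_simps)
qed

section \<open>Asymptotics\<close>

lemma harm_sub_ln_bound:
  assumes "n \<ge> 1"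
  shows "\<bar>harm n - ln (real n) - euler_mascheroni\<bar> \<le> 1 / real n"
proof -
  have "euler_mascheroni \<in> {harm n - ln (real n + 1) + 1 / (2 * (real n + 1)) ..
      harm n - ln (real n + 1) + 1 / (2 * real n)}"
    using euler_mascheroni_bounds[OF assms] by (simp add: inverse_eq_divide add_ac)
  then have lo: "harm n - ln (real n + 1) + 1 / (2 * (real n + 1)) \<le> euler_mascheroni"
    and up: "euler_mascheroni \<le> harm n - ln (real n + 1) + 1 / (2 * real n)"
    by simp_all
  have "ln (real n + 1) - ln (real n) < 1 / real n"
    using assms by (intro ln_diff_le_inverse) simp
  moreover have "ln (real n) \<le> ln (real n + 1)" "0 \<le> 1 / (2 * (real n + 1))"
    "0 \<le> 1 / (2 * real n)" "1 / (2 * real n) \<le> 1 / real n"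
    using assms by (simp_all add: frac_le)
  ultimately show ?thesis
    unfolding abs_le_iff using lo up by (intro conjI) linarith+
qed

lemma sums_inverse_squares_Suc: "(\<lambda>k. 1 / (real k + 1) ^ 2) sums (pi ^ 2 / 6)"
  using inverse_squares_sums by (simp add: add.commute)

lemma harm2_le: "harm2 n \<le> pi ^ 2 / 6"
proof -
  have "harm2 n \<le> (\<Sum>k. 1 / (real k + 1) ^ 2)"
    unfolding harm2_def using sums_inverse_squares_Suc by (intro sum_le_suminf) (auto simp: sums_iff)
  then show ?thesis using sums_inverse_squares_Suc by (simp add: sums_iff)
qed

lemma harm2_add_sub_le: "n \<ge> 1 \<Longrightarrow> harm2 (n + m) - harm2 n \<le> 1 / real n - 1 / real (n + m)"
proof (induction m)
  case (Suc m)
  have "1 / (x + 1) ^ 2 \<le> 1 / x - 1 / (x + 1)" if "x > 0" for x :: real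
  proof -
    have "1 / (x + 1) ^ 2 \<le> 1 / (x * (x + 1))"
      using that by (intro divide_left_mono) (auto simp: power2_eq_square)
    also have "\<dots> = 1 / x - 1 / (x + 1)" using that by (simp add: field_simps)
    finally show ?thesis .
  qed
  from this[of "real (n + m)"] Suc.prems
  have "1 / (real (n + m) + 1) ^ 2 \<le> 1 / real (n + m) - 1 / real (n + Suc m)" by (simp add: add_ac)
  moreover have "harm2 (n + Suc m) = harm2 (n + m) + 1 / (real (n + m) + 1) ^ 2"
    by (simp add: harm2_Suc)
  ultimately show ?case using Suc.IH[OF Suc.prems] by linarith
qed simp

lemma pi_sq_sub_harm2_le: "n \<ge> 1 \<Longrightarrow> pi ^ 2 / 6 - harm2 n \<le> 1 / real n"
proof -
  assume "n \<ge> 1"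
  have "(\<lambda>m. harm2 (m + n)) \<longlonglongrightarrow> pi ^ 2 / 6"
    using sums_inverse_squares_Suc unfolding sums_def harm2_def[abs_def] by (rule LIMSEQ_ignore_initial_segment)
  moreover have "harm2 (m + n) \<le> harm2 n + 1 / real n" for m
    using harm2_add_sub_le[OF \<open>n \<ge> 1\<close>, of m]
    by (simp add: add.commute) (smt (verit) of_nat_0_le_iff divide_nonneg_nonneg)
  ultimately have "pi ^ 2 / 6 \<le> harm2 n + 1 / real n"
    by (intro LIMSEQ_le_const2) auto
  then show ?thesis by simp
qed

lemma central_binomial_ratio_nonneg: "central_binomial_ratio n \<ge> 0"
  by (simp add: central_binomial_ratio_def prod_nonneg)

lemma central_binomial_ratio_sq_le: "central_binomial_ratio n ^ 2 * (real n + 1) \<le> 1"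
proof (induction n)
  case (Suc n)
  have pos: "0 < (2 * (real n + 1)) ^ 2" by simp
  have "(2 * real n + 1) ^ 2 * (real n + 2) / (2 * (real n + 1)) ^ 2 \<le> real n + 1"
    by (simp only: pos_divide_le_eq[OF pos]) (simp add: power2_eq_square algebra_simps)
  then have "central_binomial_ratio n ^ 2 * ((2 * real n + 1) ^ 2 * (real n + 2) / (2 * (real n + 1)) ^ 2)
      \<le> central_binomial_ratio n ^ 2 * (real n + 1)"
    by (rule mult_left_mono) simp
  also have "central_binomial_ratio n ^ 2 * ((2 * real n + 1) ^ 2 * (real n + 2) / (2 * (real n + 1)) ^ 2)
      = central_binomial_ratio (Suc n) ^ 2 * (real (Suc n) + 1)"
    by (simp add: central_binomial_ratio_Suc power_mult_distrib power_divide)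
  finally show ?case using Suc by simp
qed (simp add: central_binomial_ratio_def)

lemma bigo_mult_factor:
  assumes "f \<in> O[F](g)" "(\<lambda>x. h x * g x) \<in> O[F](k)"
  shows "(\<lambda>x. h x * f x) \<in> O[F](k)"
  using landau_o.big.mult[OF landau_o.big_refl assms(1)] assms(2) by (rule landau_o.big_trans)

lemma harm_sub_ln_bigo:
  "(\<lambda>n. harm n - ln (real n) - euler_mascheroni) \<in> O(\<lambda>n. 1 / real n)"
proof (rule landau_o.big_mono)
  show "\<forall>\<^sub>F n in sequentially. norm (harm n - ln (real n) - euler_mascheroni) \<le> norm (1 / real n)"
    using eventually_ge_at_top[of 1] by eventually_elim (simp add: harm_sub_ln_bound)
qed

lemma harm_bigo_ln: "(harm :: nat \<Rightarrow> real) \<in> O(\<lambda>n. ln (real n))"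
proof -
  have "(\<lambda>n. (harm n - ln (real n) - euler_mascheroni) + ln (real n) + euler_mascheroni)
      \<in> O(\<lambda>n. ln (real n))"
    by (intro sum_in_bigo landau_o.big_trans[OF harm_sub_ln_bigo]) real_asymp+
  then show ?thesis by simp
qed

lemma harm_pred_bigo_ln: "(\<lambda>n. harm (n - 1) :: real) \<in> O(\<lambda>n. ln (real n))"
proof -
  have "(\<lambda>n. harm (n - 1) :: real) \<in> O(harm)"
    by (intro landau_o.big_mono always_eventually) (simp add: harm_mono)
  then show ?thesis using harm_bigo_ln by (rule landau_o.big_trans)
qed

lemma harm2_tail_bigo: "(\<lambda>n. pi ^ 2 / 6 - harm2 n) \<in> O(\<lambda>n. 1 / real n)"
proof (rule landau_o.big_mono)
  show "\<forall>\<^sub>F n in sequentially. norm (pi ^ 2 / 6 - harm2 n) \<le> norm (1 / real n)"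
    using eventually_ge_at_top[of 1] by eventually_elim (use harm2_le pi_sq_sub_harm2_le in auto)
qed

lemma central_binomial_ratio_bigo: "central_binomial_ratio \<in> O(\<lambda>n. real n powr (-1/2))"
proof (rule landau_o.big_mono)
  have bound: "norm (central_binomial_ratio n) \<le> norm (real n powr (-1/2))" if "n \<ge> 1" for n
  proof -
    have "central_binomial_ratio n ^ 2 \<le> 1 / (real n + 1)"
      using central_binomial_ratio_sq_le[of n] by (simp add: le_divide_eq)
    also have "\<dots> \<le> (real n powr (-1/2)) ^ 2"
      using that by (simp add: powr_power frac_le)
    finally show ?thesis
      using central_binomial_ratio_nonneg[of n] by (auto intro: power2_le_imp_le)
  qed
  show "\<forall>\<^sub>F n in sequentially. norm (central_binomial_ratio n) \<le> norm (real n powr (-1/2))"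
    using eventually_ge_at_top[of 1] by (rule eventually_mono) (rule bound)
qed

text \<open>The part of the error shared by the second moment and the variance.\<close>

definition common_remainder :: "nat \<Rightarrow> real" where
  "common_remainder n = 4 * real n * (real n - 1) * (pi ^ 2 / 6 - harm2 n) + 12 * (real n - 1) * harm (n - 1)
    + 48 * (real n - 1) - 128 * real n * (real n - 1) * central_binomial_ratio n"

lemma common_remainder_bigo: "common_remainder \<in> O(\<lambda>n. real n powr (3/2))"
  unfolding common_remainder_def
proof (intro sum_in_bigo)
  show "(\<lambda>n. 4 * real n * (real n - 1) * (pi ^ 2 / 6 - harm2 n)) \<in> O(\<lambda>n. real n powr (3/2))"
    by (rule bigo_mult_factor[OF harm2_tail_bigo]) real_asymp
  show "(\<lambda>n. 12 * (real n - 1) * harm (n - 1)) \<in> O(\<lambda>n. real n powr (3/2))"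
    by (rule bigo_mult_factor[OF harm_pred_bigo_ln]) real_asymp
  show "(\<lambda>n. 48 * (real n - 1)) \<in> O(\<lambda>n. real n powr (3/2))"
    by real_asymp
  show "(\<lambda>n. 128 * real n * (real n - 1) * central_binomial_ratio n) \<in> O(\<lambda>n. real n powr (3/2))"
    by (rule bigo_mult_factor[OF central_binomial_ratio_bigo]) real_asymp
qed

lemma harm_add_ln_bigo: "(\<lambda>n. harm n + ln (real n) + euler_mascheroni) \<in> O(\<lambda>n. ln (real n))"
  by (intro sum_in_bigo harm_bigo_ln) real_asymp+

lemma harm_pred_add_bigo: "(\<lambda>n. harm (n - 1) + 2 :: real) \<in> O(\<lambda>n. ln (real n))"
  by (intro sum_in_bigo harm_pred_bigo_ln) real_asymp

lemma zagreb_moment2_asymp: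
  "(\<lambda>n. zagreb_moment2 n - (4 * (real n * ln (real n)) ^ 2 + 8 * euler_mascheroni * real n ^ 2 * ln (real n)
      + (16 + 4 * euler_mascheroni ^ 2 - 2 * pi ^ 2 / 3) * real n ^ 2))
   \<in> O(\<lambda>n. real n powr (3/2))"
proof -
  have "(\<lambda>n. (harm n - ln (real n) - euler_mascheroni) * (harm n + ln (real n) + euler_mascheroni))
      \<in> O(\<lambda>n. 1 / real n * ln (real n))"
    by (rule landau_o.big.mult[OF harm_sub_ln_bigo harm_add_ln_bigo])
  then have main: "(\<lambda>n. 4 * real n * (real n - 1)
        * ((harm n - ln (real n) - euler_mascheroni) * (harm n + ln (real n) + euler_mascheroni)))
      \<in> O(\<lambda>n. real n powr (3/2))"
    by (rule bigo_mult_factor) real_asymp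
  have "(\<lambda>n. - (real n * (16 + 4 * (ln (real n) + euler_mascheroni) ^ 2 - 2 * pi ^ 2 / 3))
      + 4 * real n * (real n - 1)
        * ((harm n - ln (real n) - euler_mascheroni) * (harm n + ln (real n) + euler_mascheroni))
      + common_remainder n)
    \<in> O(\<lambda>n. real n powr (3/2))"
    by (intro sum_in_bigo main common_remainder_bigo) real_asymp
  moreover have "\<forall>\<^sub>F n in sequentially.
      zagreb_moment2 n - (4 * (real n * ln (real n)) ^ 2 + 8 * euler_mascheroni * real n ^ 2 * ln (real n)
        + (16 + 4 * euler_mascheroni ^ 2 - 2 * pi ^ 2 / 3) * real n ^ 2)
    = - (real n * (16 + 4 * (ln (real n) + euler_mascheroni) ^ 2 - 2 * pi ^ 2 / 3))
      + 4 * real n * (real n - 1)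
        * ((harm n - ln (real n) - euler_mascheroni) * (harm n + ln (real n) + euler_mascheroni))
      + common_remainder n"
    using eventually_ge_at_top[of 2]
    by (rule eventually_mono) (simp add: zagreb_moment2_closed common_remainder_def power2_eq_square algebra_simps)
  ultimately show ?thesis by (subst landau_o.big.in_cong) auto
qed

lemma zagreb_variance_asymp:
  "(\<lambda>n. zagreb_moment2 n - deg_moment 2 n ^ 2 - (16 - 2 * pi ^ 2 / 3) * real n ^ 2)
   \<in> O(\<lambda>n. real n powr (3/2))"
proof -
  have "(\<lambda>n. harm (n - 1) * (harm (n - 1) + 2)) \<in> O(\<lambda>n. ln (real n) * ln (real n))"
    by (rule landau_o.big.mult[OF harm_pred_bigo_ln harm_pred_add_bigo])
  then have main: "(\<lambda>n. 4 * (real n - 1) * (harm (n - 1) * (harm (n - 1) + 2)))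
      \<in> O(\<lambda>n. real n powr (3/2))"
    by (rule bigo_mult_factor) real_asymp
  have "(\<lambda>n. - (real n * (16 - 2 * pi ^ 2 / 3)) + 4 * (real n - 1) / real n
      + 4 * (real n - 1) * (harm (n - 1) * (harm (n - 1) + 2))
      + common_remainder n)
    \<in> O(\<lambda>n. real n powr (3/2))"
    by (intro sum_in_bigo main common_remainder_bigo) real_asymp+
  moreover have "zagreb_moment2 n - deg_moment 2 n ^ 2 - (16 - 2 * pi ^ 2 / 3) * real n ^ 2
    = - (real n * (16 - 2 * pi ^ 2 / 3)) + 4 * (real n - 1) / real n
      + 4 * (real n - 1) * (harm (n - 1) * (harm (n - 1) + 2))
      + common_remainder n"
    if "n \<ge> 2" for n
  proof -
    have harm_n: "harm n = harm (n - 1) + 1 / real n" using that by (simp add: harm_eq_harm_pred)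
    show ?thesis
      unfolding zagreb_moment2_closed[OF that] deg_moment_2_closed[OF that] harm_n
      using that by (simp add: common_remainder_def field_simps power2_eq_square)
  qed
  ultimately show ?thesis
    by (subst landau_o.big.in_cong[OF eventually_mono[OF eventually_ge_at_top[of 2]]]) auto
qed

lemma real_zagreb: "real (zagreb n es) = deg_power_sum 2 n es"
  by (simp add: zagreb_def deg_power_sum_def)

theorem proposition4p2:
  shows "(\<lambda>n. measure_pmf.expectation (tree_pmf n) (\<lambda>t. real (zagreb n t) ^ 2)
            - (4 * (real n * ln (real n)) ^ 2
               + 8 * euler_mascheroni * (real n) ^ 2 * ln (real n)
               + (16 + 4 * euler_mascheroni ^ 2 - 2 * pi ^ 2 / 3) * (real n) ^ 2))
           \<in> O(\<lambda>n. real n powr (3 / 2))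
       \<and> (\<lambda>n. measure_pmf.variance (tree_pmf n) (\<lambda>t. real (zagreb n t))
            - (16 - 2 * pi ^ 2 / 3) * (real n) ^ 2)
           \<in> O(\<lambda>n. real n powr (3 / 2))"
proof -
  have mean_sq: "measure_pmf.expectation (tree_pmf n) (\<lambda>t. real (zagreb n t) ^ 2) = zagreb_moment2 n"
    for n
    by (simp add: real_zagreb zagreb_moment2_def)
  have variance: "measure_pmf.variance (tree_pmf n) (\<lambda>t. real (zagreb n t))
      = zagreb_moment2 n - deg_moment 2 n ^ 2" for n
    by (simp add: real_zagreb measure_pmf.variance_eq zagreb_moment2_def deg_moment_def)
  show ?thesis
    unfolding mean_sq variance using zagreb_moment2_asymp zagreb_variance_asymp by simp
qed

end
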